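(* Let $X$ be a Banach lattice, $S$ a convex $C_0$-semigroup on $X$, $T>0$ and $x_0\in X$. Then there exist $L\ge0$ and $r>0$ such that $\sup_{t\in[0,T]}\|S_x(t)y\|\le L\|y\|$ for all $x\in X$ with $\|x-x_0\|\le r$ and all $y\in X$ with $\|y\|\le r$.
   Context: An operator $T\colon X\to X$ is convex if $T(\lambda x+(1-\lambda)y)\le\lambda Tx+(1-\lambda)Ty$ for all $x,y\in X$, $\lambda\in[0,1]$, and bounded if $\sup_{\|x\|\le r}\|Tx\|<\infty$ for all $r>0$. A convex $C_0$-semigroup is a family $(S(t))_{t\ge0}$ of bounded convex operators $X\to X$ with $S(0)=\mathrm{id}$, $S(t+s)=S(t)S(s)$ for all $s,t\ge0$, and $S(t)x\to x$ as $t\downarrow0$ for all $x$. For $t\ge0$ and $x,y\in X$, $S_x(t)y:=S(t)(x+y)-S(t)x$. *)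

theory Defs
  imports "HOL-Analysis.Analysis"
begin

text \<open>Banach lattice: a real Banach space which is a vector lattice (Riesz space),
  i.e. an ordered real vector space whose order is a lattice, such that the norm
  is a lattice norm: abs x \<le> abs y implies norm x \<le> norm y, where
  abs x = sup x (-x).\<close>
class banach_lattice = banach + ordered_real_vector + lattice +
  assumes lattice_norm: "sup x (- x) \<le> sup y (- y) \<Longrightarrow> norm x \<le> norm y"

definition convex_operator :: "('a::banach_lattice \<Rightarrow> 'a) \<Rightarrow> bool" where
  "convex_operator T \<longleftrightarrow>
     (\<forall>x y. \<forall>l::real. 0 \<le> l \<and> l \<le> 1 \<longrightarrow>
        T (l *\<^sub>R x + (1 - l) *\<^sub>R y) \<le> l *\<^sub>R T x + (1 - l) *\<^sub>R T y)"

definition bounded_operator :: "('a::real_normed_vector \<Rightarrow> 'a) \<Rightarrow> bool" where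
  "bounded_operator T \<longleftrightarrow> (\<forall>r>0. bdd_above ((\<lambda>x. norm (T x)) ` cball 0 r))"

definition convex_C0_semigroup :: "(real \<Rightarrow> 'a::banach_lattice \<Rightarrow> 'a) \<Rightarrow> bool" where
  "convex_C0_semigroup S \<longleftrightarrow>
     (\<forall>t\<ge>0. convex_operator (S t) \<and> bounded_operator (S t)) \<and>
     S 0 = id \<and>
     (\<forall>s\<ge>0. \<forall>t\<ge>0. S (t + s) = S t \<circ> S s) \<and>
     (\<forall>x. ((\<lambda>t. S t x) \<longlongrightarrow> x) (at_right 0))"

definition shifted_semigroup :: "(real \<Rightarrow> 'a::real_normed_vector \<Rightarrow> 'a) \<Rightarrow> 'a \<Rightarrow> real \<Rightarrow> 'a \<Rightarrow> 'a" where
  "shifted_semigroup S x t y = S t (x + y) - S t x"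

end

theory Submission
  imports Defs
begin

text \<open>A convex operator F bounded by M near x0 is Lipschitz near x0: in the lattice order the
  increment F (x + y) - F x is squeezed between two chord increments of length r, and the lattice
  norm turns this order bound into the norm bound 4 M / r * norm y. It therefore suffices to bound
  all S t, 0 \<le> t \<le> T, uniformly near x0. A Baire category argument gives such a bound on some
  ball for any pointwise bounded family of continuous convex operators, and convexity transports
  it to a ball around x0. Pointwise boundedness of the S t on [0, T] follows from continuity of the
  orbits t \<mapsto> S t x; the delicate part is left continuity, which uses the same uniform
  boundedness principle for the operators S (t n) along null sequences t.\<close>

lemma sup_neg_nonneg:
  fixes a :: "'a::banach_lattice"
  shows "0 \<le> sup a (- a)"
proof -
  have "0 \<le> sup a (- a) + sup a (- a)"
    using add_mono[of a "sup a (- a)" "- a" "sup a (- a)"] by simp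
  then have "(1/2::real) *\<^sub>R 0 \<le> (1/2::real) *\<^sub>R (sup a (- a) + sup a (- a))"
    by (intro scaleR_left_mono) auto
  then show ?thesis
    by (metis scaleR_half_double scaleR_zero_right)
qed

lemma sup_neg_eq_self:
  fixes w :: "'a::banach_lattice"
  assumes "0 \<le> w"
  shows "sup w (- w) = w"
  using assms by (meson neg_le_0_iff_le order_trans sup_absorb1)

lemma norm_sup_neg:
  fixes a :: "'a::banach_lattice"
  shows "norm (sup a (- a)) = norm a"
  using sup_neg_eq_self[OF sup_neg_nonneg[of a]]
  by (intro antisym lattice_norm) simp_all

lemma norm_between_le:
  fixes l z u :: "'a::banach_lattice"
  assumes "l \<le> z" "z \<le> u"
  shows "norm z \<le> norm l + norm u"
proof -
  define w where "w = sup l (- l) + sup u (- u)"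
  have "z \<le> sup u (- u)" and "- z \<le> sup l (- l)"
    using assms by (auto intro: le_supI1 le_supI2)
  then have "z \<le> w" and "- z \<le> w"
    using sup_neg_nonneg[of l] sup_neg_nonneg[of u]
    by (auto simp: w_def intro: add_increasing add_increasing2)
  moreover have "0 \<le> w"
    by (simp add: w_def sup_neg_nonneg)
  ultimately have "norm z \<le> norm w"
    by (intro lattice_norm) (simp add: sup_neg_eq_self)
  also have "\<dots> \<le> norm l + norm u"
    using norm_triangle_ineq[of "sup l (- l)" "sup u (- u)"] by (simp add: w_def norm_sup_neg)
  finally show ?thesis .
qed

lemma convex_operatorD:
  assumes "convex_operator F" "0 \<le> l" "l \<le> 1"
  shows "F (l *\<^sub>R x + (1 - l) *\<^sub>R y) \<le> l *\<^sub>R F x + (1 - l) *\<^sub>R F y"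
  using assms unfolding convex_operator_def by blast

lemma convex_operator_midpoint_le:
  assumes "convex_operator F"
  shows "F (midpoint a b) \<le> midpoint (F a) (F b)"
  using convex_operatorD[OF assms, of "inverse 2" a b]
  by (simp add: midpoint_def scaleR_add_right)

lemma convex_operator_increment_bounds:
  assumes F: "convex_operator F" and l: "0 \<le> l" "l \<le> 1"
  shows "l *\<^sub>R (F x - F (x - u)) \<le> F (x + l *\<^sub>R u) - F x"
    and "F (x + l *\<^sub>R u) - F x \<le> l *\<^sub>R (F (x + u) - F x)"
proof -
  define m where "m = 1 / (1 + l)"
  have m: "0 \<le> m" "m \<le> 1" "(1 + l) * m = 1" using l by (auto simp: m_def)
  have "x = m *\<^sub>R (x + l *\<^sub>R u) + (1 - m) *\<^sub>R (x - u)"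
    using m(3) by (simp add: algebra_simps scaleR_add_left[symmetric])
  then have "F x \<le> m *\<^sub>R F (x + l *\<^sub>R u) + (1 - m) *\<^sub>R F (x - u)"
    by (metis convex_operatorD[OF F m(1,2)])
  then have "(1 + l) *\<^sub>R F x \<le> (1 + l) *\<^sub>R (m *\<^sub>R F (x + l *\<^sub>R u) + (1 - m) *\<^sub>R F (x - u))"
    using l by (intro scaleR_left_mono) auto
  also have "\<dots> = F (x + l *\<^sub>R u) + l *\<^sub>R F (x - u)"
    using m(3) by (simp add: algebra_simps)
  finally show "l *\<^sub>R (F x - F (x - u)) \<le> F (x + l *\<^sub>R u) - F x"
    by (simp add: algebra_simps)
next
  have "x + l *\<^sub>R u = l *\<^sub>R (x + u) + (1 - l) *\<^sub>R x"
    by (simp add: algebra_simps)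
  then have "F (x + l *\<^sub>R u) \<le> l *\<^sub>R F (x + u) + (1 - l) *\<^sub>R F x"
    by (metis convex_operatorD[OF F l])
  then show "F (x + l *\<^sub>R u) - F x \<le> l *\<^sub>R (F (x + u) - F x)"
    by (simp add: algebra_simps)
qed

lemma convex_operator_norm_le_midpoints:
  fixes F :: "'a::banach_lattice \<Rightarrow> 'a"
  assumes F: "convex_operator F" and "p = midpoint z q" and "z = midpoint a b"
  shows "norm (F z) \<le> 2 * norm (F p) + norm (F q) + (norm (F a) + norm (F b)) / 2"
proof -
  have "F p \<le> midpoint (F z) (F q)"
    using convex_operator_midpoint_le[OF F] assms(2) by blast
  then have "2 *\<^sub>R F p \<le> 2 *\<^sub>R midpoint (F z) (F q)"
    by (intro scaleR_left_mono) auto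
  then have lower: "2 *\<^sub>R F p - F q \<le> F z"
    by (simp add: midpoint_def diff_le_eq)
  have upper: "F z \<le> midpoint (F a) (F b)"
    using convex_operator_midpoint_le[OF F] assms(3) by blast
  have "norm (F z) \<le> norm (2 *\<^sub>R F p - F q) + norm (midpoint (F a) (F b))"
    by (rule norm_between_le[OF lower upper])
  also have "\<dots> \<le> (2 * norm (F p) + norm (F q)) + (norm (F a) + norm (F b)) / 2"
  proof (rule add_mono)
    show "norm (2 *\<^sub>R F p - F q) \<le> 2 * norm (F p) + norm (F q)"
      using norm_triangle_ineq4[of "2 *\<^sub>R F p" "F q"] by simp
    show "norm (midpoint (F a) (F b)) \<le> (norm (F a) + norm (F b)) / 2"
      using norm_triangle_ineq[of "F a" "F b"] by (simp add: midpoint_def divide_right_mono)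
  qed
  finally show ?thesis .
qed

lemma convex_operator_increment_norm_le:
  fixes F :: "'a::banach_lattice \<Rightarrow> 'a"
  assumes F: "convex_operator F" and "r > 0"
    and M: "\<forall>z\<in>cball x0 (2 * r). norm (F z) \<le> M"
    and x: "norm (x - x0) \<le> r" and y: "norm y \<le> r"
  shows "norm (F (x + y) - F x) \<le> 4 * M / r * norm y"
proof (cases "y = 0")
  case True
  then show ?thesis by simp
next
  case False
  define l where "l = norm y / r"
  define u where "u = (r / norm y) *\<^sub>R y"
  have l: "0 \<le> l" "l \<le> 1"
    using y \<open>r > 0\<close> by (auto simp: l_def)
  have y_eq: "y = l *\<^sub>R u"
    using False \<open>r > 0\<close> by (simp add: l_def u_def)
  have "norm u = r"
    using False \<open>r > 0\<close> by (simp add: u_def)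
  then have "x \<in> cball x0 (2 * r)" "x + u \<in> cball x0 (2 * r)" "x - u \<in> cball x0 (2 * r)"
    using x norm_triangle_ineq[of "x - x0" u] norm_triangle_ineq4[of "x - x0" u] \<open>r > 0\<close>
    by (auto simp: dist_norm norm_minus_commute algebra_simps)
  then have "norm (F x) \<le> M" "norm (F (x + u)) \<le> M" "norm (F (x - u)) \<le> M"
    using M by auto
  then have chords: "norm (F x - F (x - u)) \<le> 2 * M" "norm (F (x + u) - F x) \<le> 2 * M"
    using norm_triangle_ineq4[of "F x" "F (x - u)"] norm_triangle_ineq4[of "F (x + u)" "F x"]
    by auto
  have "norm (F (x + y) - F x) \<le> norm (l *\<^sub>R (F x - F (x - u))) + norm (l *\<^sub>R (F (x + u) - F x))"
    unfolding y_eq by (rule norm_between_le[OF convex_operator_increment_bounds[OF F l]])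
  also have "\<dots> = l * norm (F x - F (x - u)) + l * norm (F (x + u) - F x)"
    using l by simp
  also have "\<dots> \<le> l * (2 * M) + l * (2 * M)"
    using chords l by (intro add_mono mult_left_mono) auto
  also have "\<dots> = 4 * M / r * norm y"
    using \<open>r > 0\<close> by (simp add: l_def field_simps)
  finally show ?thesis .
qed

lemma convex_bounded_operator_continuous:
  fixes F :: "'a::banach_lattice \<Rightarrow> 'a"
  assumes F: "convex_operator F" and "bounded_operator F"
  shows "continuous_on UNIV F"
proof -
  have "isCont F x" for x
  proof -
    have "norm x + 2 > 0"
      by (simp add: add_nonneg_pos)
    then obtain M where M0: "\<forall>z\<in>cball 0 (norm x + 2). norm (F z) \<le> M"
      using \<open>bounded_operator F\<close> unfolding bounded_operator_def bdd_above_def by fastforce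
    have M: "\<forall>z\<in>cball x (2 * 1). norm (F z) \<le> M"
    proof
      fix z assume "z \<in> cball x (2 * 1)"
      then have "norm z \<le> norm x + 2"
        using norm_triangle_sub[of z x] by (simp add: dist_norm norm_minus_commute)
      then show "norm (F z) \<le> M"
        using M0 by simp
    qed
    have "norm (F z - F x) \<le> 4 * M * norm (z - x)" if "dist z x < 1" for z
      using convex_operator_increment_norm_le[OF F _ M, of x "z - x"] that by (simp add: dist_norm)
    then have "eventually (\<lambda>z. norm (F z - F x) \<le> 4 * M * norm (z - x)) (at x)"
      unfolding eventually_at by (intro exI[of _ 1]) auto
    moreover have "((\<lambda>z. 4 * M * norm (z - x)) \<longlongrightarrow> 0) (at x)"
      by (auto intro!: tendsto_eq_intros)
    ultimately have "((\<lambda>z. F z - F x) \<longlongrightarrow> 0) (at x)"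
      by (rule Lim_null_comparison)
    then show "isCont F x"
      by (simp add: isCont_def LIM_zero_iff)
  qed
  then show ?thesis
    by (simp add: continuous_at_imp_continuous_on)
qed

lemma pointwise_bounded_imp_uniformly_bounded_on_ball:
  fixes F :: "'i \<Rightarrow> 'a::banach \<Rightarrow> 'b::real_normed_vector"
  assumes cont: "\<forall>i\<in>I. continuous_on UNIV (F i)"
    and bdd: "\<forall>x. \<exists>C. \<forall>i\<in>I. norm (F i x) \<le> C"
  shows "\<exists>z \<rho> N. \<rho> > 0 \<and> (\<forall>i\<in>I. \<forall>x\<in>ball z \<rho>. norm (F i x) \<le> N)"
proof -
  define A where "A n = (\<Inter>i\<in>I. {x. norm (F i x) \<le> real n})" for n :: nat
  have "closed (A n)" for n
    unfolding A_def using cont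
    by (intro closed_INT ballI closed_Collect_le continuous_intros) (auto intro: continuous_on_norm)
  moreover have "\<Union>(range A) = UNIV"
  proof -
    have "\<exists>n. x \<in> A n" for x
    proof -
      obtain C where "\<forall>i\<in>I. norm (F i x) \<le> C"
        using bdd by blast
      moreover obtain n :: nat where "C \<le> real n"
        using real_arch_simple by blast
      ultimately have "x \<in> A n"
        by (auto simp: A_def intro: order_trans)
      then show ?thesis ..
    qed
    then show ?thesis by blast
  qed
  ultimately obtain n where "interior (A n) \<noteq> {}"
    using Baire_category_alt[of euclidean "range A"]
    by (force simp: completely_metrizable_space_euclidean)
  then obtain z \<rho> where "\<rho> > 0" "ball z \<rho> \<subseteq> A n"
    using mem_interior by blast
  then have "\<forall>i\<in>I. \<forall>x\<in>ball z \<rho>. norm (F i x) \<le> real n"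
    by (auto simp: A_def)
  with \<open>\<rho> > 0\<close> show ?thesis
    by blast
qed

lemma convex_operators_uniformly_bounded:
  fixes F :: "'i \<Rightarrow> 'a::banach_lattice \<Rightarrow> 'a"
  assumes conv: "\<forall>i\<in>I. convex_operator (F i)" and cont: "\<forall>i\<in>I. continuous_on UNIV (F i)"
    and bdd: "\<forall>x. \<exists>C. \<forall>i\<in>I. norm (F i x) \<le> C"
  shows "\<exists>r>0. \<exists>M. \<forall>i\<in>I. \<forall>z\<in>cball x0 r. norm (F i z) \<le> M"
proof -
  obtain z1 \<rho> N where "\<rho> > 0" and N: "\<forall>i\<in>I. \<forall>x\<in>ball z1 \<rho>. norm (F i x) \<le> N"
    using pointwise_bounded_imp_uniformly_bounded_on_ball[OF cont bdd] by blast
  \<comment> \<open>q and w are chosen so that z = midpoint a w and p = midpoint z q with a, p close to z1.\<close>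
  define q where "q = 2 *\<^sub>R z1 - x0"
  define w where "w = 2 *\<^sub>R x0 - z1"
  obtain Cq Cw where Cq: "\<forall>i\<in>I. norm (F i q) \<le> Cq" and Cw: "\<forall>i\<in>I. norm (F i w) \<le> Cw"
    using bdd by meson
  have "\<forall>i\<in>I. \<forall>z\<in>cball x0 (\<rho> / 4). norm (F i z) \<le> 2 * N + Cq + (N + Cw) / 2"
  proof (intro ballI)
    fix i z assume "i \<in> I" and z: "z \<in> cball x0 (\<rho> / 4)"
    define p where "p = midpoint z q"
    define a where "a = z1 + 2 *\<^sub>R (z - x0)"
    have "norm (z - x0) \<le> \<rho> / 4"
      using z by (simp add: dist_norm norm_minus_commute)
    moreover have "z1 - p = (1/2) *\<^sub>R (x0 - z)" "z1 - a = 2 *\<^sub>R (x0 - z)"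
      by (simp_all add: p_def q_def a_def midpoint_def algebra_simps)
    ultimately have "p \<in> ball z1 \<rho>" "a \<in> ball z1 \<rho>"
      using \<open>\<rho> > 0\<close> by (auto simp: dist_norm norm_minus_commute)
    then have "norm (F i p) \<le> N" "norm (F i a) \<le> N"
      using N \<open>i \<in> I\<close> by auto
    moreover have "norm (F i q) \<le> Cq" "norm (F i w) \<le> Cw"
      using Cq Cw \<open>i \<in> I\<close> by auto
    moreover have "z = midpoint a w"
      by (simp add: a_def w_def midpoint_def algebra_simps)
    then have "norm (F i z) \<le> 2 * norm (F i p) + norm (F i q) + (norm (F i a) + norm (F i w)) / 2"
      using conv \<open>i \<in> I\<close> p_def by (intro convex_operator_norm_le_midpoints) auto
    ultimately show "norm (F i z) \<le> 2 * N + Cq + (N + Cw) / 2"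
      by argo
  qed
  moreover have "\<rho> / 4 > 0"
    using \<open>\<rho> > 0\<close> by simp
  ultimately show ?thesis
    by blast
qed

lemma convex_operators_uniformly_lipschitz_near:
  fixes F :: "'i \<Rightarrow> 'a::banach_lattice \<Rightarrow> 'a"
  assumes conv: "\<forall>i\<in>I. convex_operator (F i)" and cont: "\<forall>i\<in>I. continuous_on UNIV (F i)"
    and bdd: "\<forall>x. \<exists>C. \<forall>i\<in>I. norm (F i x) \<le> C"
  shows "\<exists>L\<ge>0. \<exists>r>0. \<forall>i\<in>I. \<forall>x y. norm (x - x0) \<le> r \<longrightarrow> norm y \<le> r \<longrightarrow>
    norm (F i (x + y) - F i x) \<le> L * norm y"
proof -
  obtain r M where "r > 0" and "\<forall>i\<in>I. \<forall>z\<in>cball x0 r. norm (F i z) \<le> M"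
    using convex_operators_uniformly_bounded[OF conv cont bdd] by blast
  then have M: "\<forall>i\<in>I. \<forall>z\<in>cball x0 (2 * (r / 2)). norm (F i z) \<le> max 0 M"
    by (simp add: le_max_iff_disj)
  have "norm (F i (x + y) - F i x) \<le> 4 * max 0 M / (r / 2) * norm y"
    if "i \<in> I" "norm (x - x0) \<le> r / 2" "norm y \<le> r / 2" for i x y
    using convex_operator_increment_norm_le[OF _ _ bspec[OF M \<open>i \<in> I\<close>] that(2,3)]
      conv \<open>i \<in> I\<close> \<open>r > 0\<close> by simp
  moreover have "0 \<le> 4 * max 0 M / (r / 2)" and "r / 2 > 0"
    using \<open>r > 0\<close> by auto
  ultimately show ?thesis
    by blast
qed

context
  fixes S :: "real \<Rightarrow> 'a::banach_lattice \<Rightarrow> 'a"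
  assumes S: "convex_C0_semigroup S"
begin

lemma convex_C0_semigroup_convex: "0 \<le> t \<Longrightarrow> convex_operator (S t)"
  using S by (simp add: convex_C0_semigroup_def)

lemma convex_C0_semigroup_continuous: "0 \<le> t \<Longrightarrow> continuous_on UNIV (S t)"
  using S by (simp add: convex_C0_semigroup_def convex_bounded_operator_continuous)

lemma convex_C0_semigroup_add: "0 \<le> s \<Longrightarrow> 0 \<le> t \<Longrightarrow> S (t + s) x = S t (S s x)"
  using S by (simp add: convex_C0_semigroup_def)

lemma convex_C0_semigroup_tendsto_at_right_0: "((\<lambda>t. S t x) \<longlongrightarrow> x) (at_right 0)"
  using S by (simp add: convex_C0_semigroup_def)

lemma convex_C0_semigroup_orbit_tendsto_at_right:
  assumes "0 \<le> t"
  shows "((\<lambda>s. S s x) \<longlongrightarrow> S t x) (at_right t)"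
proof -
  have "eventually (\<lambda>s. S s (S t x) = S (s + t) x) (at_right 0)"
    by (rule eventually_mono[OF eventually_at_right_less])
      (simp add: assms convex_C0_semigroup_add)
  with convex_C0_semigroup_tendsto_at_right_0
  have "((\<lambda>s. S (s + t) x) \<longlongrightarrow> S t x) (at_right 0)"
    by (rule Lim_transform_eventually)
  then show ?thesis
    by (simp add: at_right_to_0[of t] filterlim_filtermap)
qed

lemma convex_C0_semigroup_locally_bounded:
  "\<exists>h>0. \<exists>r>0. \<exists>M. \<forall>t\<in>{0..h}. \<forall>z\<in>cball x0 r. norm (S t z) \<le> M"
proof (rule ccontr)
  \<comment> \<open>Otherwise there are t n \<longlonglongrightarrow> 0 and z n \<longlonglongrightarrow> x0 with norm (S (t n) (z n)) > n, although
    the family S (t n) is pointwise bounded by strong continuity at 0.\<close>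
  assume unbounded: "\<not> ?thesis"
  have "inverse (real (Suc n)) > 0" for n
    by simp
  then have "\<not> (\<forall>t\<in>{0..inverse (real (Suc n))}. \<forall>z\<in>cball x0 (inverse (real (Suc n))).
      norm (S t z) \<le> real n)" for n
    using unbounded by blast
  then have "\<exists>t\<in>{0..inverse (real (Suc n))}. \<exists>z\<in>cball x0 (inverse (real (Suc n))).
      real n < norm (S t z)" for n
    by (simp add: not_le)
  then obtain t z where t: "\<And>n. t n \<in> {0..inverse (real (Suc n))}"
    and z: "\<And>n. z n \<in> cball x0 (inverse (real (Suc n)))"
    and large: "\<And>n. real n < norm (S (t n) (z n))"
    by metis
  have "t \<longlonglongrightarrow> 0"
    using t by (intro tendsto_sandwich[OF _ _ tendsto_const LIMSEQ_inverse_real_of_nat]) auto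
  have orbit_cont: "continuous (at 0 within {0..}) (\<lambda>s. S s x)" for x
    using convex_C0_semigroup_orbit_tendsto_at_right[of 0 x]
    by (simp add: continuous_within at_within_Ici_at_right)
  have "(\<lambda>n. S (t n) x) \<longlonglongrightarrow> S 0 x" for x
    using continuous_within_tendsto_compose'[OF orbit_cont _ \<open>t \<longlonglongrightarrow> 0\<close>] t by simp
  then have "Bseq (\<lambda>n. S (t n) x)" for x
    by (rule convergent_imp_Bseq[OF convergentI])
  then have "\<forall>x. \<exists>C. \<forall>n\<in>UNIV. norm (S (t n) x) \<le> C"
    by (meson BseqD)
  then obtain r M where "r > 0" and M: "\<forall>n\<in>UNIV. \<forall>z\<in>cball x0 r. norm (S (t n) z) \<le> M"
    using convex_operators_uniformly_bounded[of UNIV "\<lambda>n. S (t n)" x0] t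
    by (auto simp: convex_C0_semigroup_convex convex_C0_semigroup_continuous)
  obtain n :: nat where "M < real n" and "inverse r < real n"
    using reals_Archimedean2[of "max M (inverse r)"] by auto
  then have "inverse (real (Suc n)) < inverse (inverse r)"
    using \<open>r > 0\<close> by (intro less_imp_inverse_less) auto
  then have "z n \<in> cball x0 r"
    using z[of n] \<open>r > 0\<close> subset_cball[of "inverse (real (Suc n))" r x0] by auto
  then have "norm (S (t n) (z n)) \<le> M"
    using M by blast
  with large[of n] \<open>M < real n\<close> show False
    by linarith
qed

lemma convex_C0_semigroup_orbit_tendsto_at_left_small:
  "\<exists>h>0. \<forall>\<epsilon>\<in>{0<..h}. ((\<lambda>s. S s x) \<longlongrightarrow> S \<epsilon> x) (at_left \<epsilon>)"
proof -
  obtain h r M where "h > 0" "r > 0" and M: "\<forall>t\<in>{0..h}. \<forall>z\<in>cball x (2 * (r / 2)). norm (S t z) \<le> M"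
    using convex_C0_semigroup_locally_bounded[of x] by auto
  have "((\<lambda>s. S s x) \<longlongrightarrow> S \<epsilon> x) (at_left \<epsilon>)" if \<epsilon>: "\<epsilon> \<in> {0<..h}" for \<epsilon>
  proof -
    \<comment> \<open>S \<epsilon> x = S \<sigma> (x + y \<sigma>) with y \<sigma> \<longrightarrow> 0, and the S \<sigma>, \<sigma> \<le> h, are uniformly Lipschitz near x.\<close>
    define y where "y \<sigma> = S (\<epsilon> - \<sigma>) x - x" for \<sigma>
    have "filterlim (\<lambda>\<sigma>. \<epsilon> - \<sigma>) (at_right 0) (at_left \<epsilon>)"
      by (intro tendsto_imp_filterlim_at_right tendsto_eq_intros)
        (use eventually_at_left_real[of 0 \<epsilon>] \<epsilon> in \<open>auto elim: eventually_mono\<close>)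
    from filterlim_compose[OF convex_C0_semigroup_tendsto_at_right_0 this]
    have "((\<lambda>\<sigma>. S (\<epsilon> - \<sigma>) x) \<longlongrightarrow> x) (at_left \<epsilon>)" .
    then have y: "(y \<longlongrightarrow> 0) (at_left \<epsilon>)"
      unfolding y_def[abs_def] by (rule LIM_zero)
    have "eventually (\<lambda>\<sigma>. \<sigma> \<in> {0<..<\<epsilon>} \<and> norm (y \<sigma>) < r / 2) (at_left \<epsilon>)"
      using eventually_at_left_real[of 0 \<epsilon>] order_tendstoD(2)[OF tendsto_norm_zero[OF y], of "r / 2"]
        \<epsilon> \<open>r > 0\<close> by (auto elim: eventually_elim2)
    then have "eventually (\<lambda>\<sigma>. norm (S \<sigma> x - S \<epsilon> x) \<le> 4 * M / (r / 2) * norm (y \<sigma>)) (at_left \<epsilon>)"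
    proof eventually_elim
      case (elim \<sigma>)
      then have "S \<epsilon> x = S \<sigma> (x + y \<sigma>)"
        using convex_C0_semigroup_add[of "\<epsilon> - \<sigma>" \<sigma> x] by (simp add: y_def)
      moreover have M\<sigma>: "\<forall>z\<in>cball x (2 * (r / 2)). norm (S \<sigma> z) \<le> M"
        using M elim \<epsilon> by auto
      ultimately show ?case
        using convex_operator_increment_norm_le[OF convex_C0_semigroup_convex _ M\<sigma>, of x "y \<sigma>"]
          elim \<open>r > 0\<close> by (auto simp: norm_minus_commute)
    qed
    moreover have "((\<lambda>\<sigma>. 4 * M / (r / 2) * norm (y \<sigma>)) \<longlongrightarrow> 0) (at_left \<epsilon>)"
      by (rule tendsto_mult_right_zero[OF tendsto_norm_zero[OF y]])
    ultimately have "((\<lambda>\<sigma>. S \<sigma> x - S \<epsilon> x) \<longlongrightarrow> 0) (at_left \<epsilon>)"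
      by (rule Lim_null_comparison)
    then show ?thesis
      by (simp add: LIM_zero_iff)
  qed
  with \<open>h > 0\<close> show ?thesis
    by blast
qed

lemma convex_C0_semigroup_orbit_continuous: "continuous_on {0..} (\<lambda>t. S t x)"
proof -
  obtain h where "h > 0" and left_small: "\<forall>\<epsilon>\<in>{0<..h}. ((\<lambda>s. S s x) \<longlongrightarrow> S \<epsilon> x) (at_left \<epsilon>)"
    using convex_C0_semigroup_orbit_tendsto_at_left_small by blast
  have left: "((\<lambda>s. S s x) \<longlongrightarrow> S t x) (at_left t)" if "t > 0" for t
  proof -
    define \<epsilon> where "\<epsilon> = min h t"
    have \<epsilon>: "\<epsilon> \<in> {0<..h}" "\<epsilon> \<le> t"
      using \<open>h > 0\<close> that by (auto simp: \<epsilon>_def)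
    have near: "eventually (\<lambda>s. s \<in> {t - \<epsilon><..<t}) (at_left t)"
      using \<epsilon> by (intro eventually_at_left_real) auto
    have "filterlim (\<lambda>s. s - (t - \<epsilon>)) (at_left \<epsilon>) (at_left t)"
    proof (rule tendsto_imp_filterlim_at_left)
      have "((\<lambda>s. s - (t - \<epsilon>)) \<longlongrightarrow> t - (t - \<epsilon>)) (at_left t)"
        by (intro tendsto_diff tendsto_ident_at tendsto_const)
      then show "((\<lambda>s. s - (t - \<epsilon>)) \<longlongrightarrow> \<epsilon>) (at_left t)"
        by simp
      show "eventually (\<lambda>s. s - (t - \<epsilon>) < \<epsilon>) (at_left t)"
        using near by (rule eventually_mono) auto
    qed
    from filterlim_compose[OF left_small[rule_format, OF \<epsilon>(1)] this]
    have shifted: "((\<lambda>s. S (s - (t - \<epsilon>)) x) \<longlongrightarrow> S \<epsilon> x) (at_left t)" .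
    have "isCont (S (t - \<epsilon>)) (S \<epsilon> x)"
      using convex_C0_semigroup_continuous[of "t - \<epsilon>"] \<epsilon>(2)
      by (simp add: continuous_on_eq_continuous_at)
    from isCont_tendsto_compose[OF this shifted]
    have "((\<lambda>s. S (t - \<epsilon>) (S (s - (t - \<epsilon>)) x)) \<longlongrightarrow> S (t - \<epsilon>) (S \<epsilon> x)) (at_left t)" .
    moreover have "eventually (\<lambda>s. S (t - \<epsilon>) (S (s - (t - \<epsilon>)) x) = S s x) (at_left t)"
      using near
    proof eventually_elim
      case (elim s)
      then show ?case
        using convex_C0_semigroup_add[of "s - (t - \<epsilon>)" "t - \<epsilon>" x] \<epsilon>(2) by simp
    qed
    moreover have "S (t - \<epsilon>) (S \<epsilon> x) = S t x"
      using \<epsilon> by (simp add: convex_C0_semigroup_add[symmetric])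
    ultimately show ?thesis
      by (simp add: tendsto_cong)
  qed
  show ?thesis
    unfolding continuous_on_def
  proof (intro ballI)
    fix t :: real assume "t \<in> {0..}"
    show "((\<lambda>s. S s x) \<longlongrightarrow> S t x) (at t within {0..})"
    proof (cases "t = 0")
      case True
      then show ?thesis
        using convex_C0_semigroup_orbit_tendsto_at_right[of 0 x] by (simp add: at_within_Ici_at_right)
    next
      case False
      with \<open>t \<in> {0..}\<close> have "((\<lambda>s. S s x) \<longlongrightarrow> S t x) (at t)"
        by (intro filterlim_split_at left convex_C0_semigroup_orbit_tendsto_at_right) auto
      then show ?thesis
        by (rule tendsto_within_subset) simp
    qed
  qed
qed

lemma convex_C0_semigroup_orbit_bounded: "\<exists>C. \<forall>t\<in>{0..T}. norm (S t x) \<le> C"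
proof -
  have "compact ((\<lambda>t. S t x) ` {0..T})"
    by (intro compact_continuous_image continuous_on_subset[OF convex_C0_semigroup_orbit_continuous])
      auto
  then show ?thesis
    by (auto dest!: compact_imp_bounded simp: bounded_iff)
qed

end

theorem proposition2p2:
  fixes S :: "real \<Rightarrow> 'a::banach_lattice \<Rightarrow> 'a" and T :: real and x0 :: 'a
  assumes "convex_C0_semigroup S" and "T > 0"
  shows "\<exists>L\<ge>0. \<exists>r>0. \<forall>x y. norm (x - x0) \<le> r \<longrightarrow> norm y \<le> r \<longrightarrow>
           (\<forall>t\<in>{0..T}. norm (shifted_semigroup S x t y) \<le> L * norm y)"
proof -
  note S = assms(1)
  have "\<forall>t\<in>{0..T}. convex_operator (S t)" and "\<forall>t\<in>{0..T}. continuous_on UNIV (S t)"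
    using convex_C0_semigroup_convex[OF S] convex_C0_semigroup_continuous[OF S] by auto
  moreover have "\<forall>x. \<exists>C. \<forall>t\<in>{0..T}. norm (S t x) \<le> C"
    using convex_C0_semigroup_orbit_bounded[OF S] by blast
  ultimately show ?thesis
    using convex_operators_uniformly_lipschitz_near[of "{0..T}" S x0]
    unfolding shifted_semigroup_def by blast
qed

end
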